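(* Let $\mathbb{K}$ be a field of characteristic zero containing all complex roots of unity, $q$ transcendental over $\mathbb{K}$, $\mathbb{W}=\mathbb{K}(q)[M]\langle L\rangle$ the first $q$-Weyl algebra and $\mathbb{O}=\mathbb{K}(q,M)\langle L\rangle$. Fix a nonzero $P\in\mathbb{W}$ and a complex $m$-th root of unity $\omega$, and let $\tau_\omega(P)$ be defined as in the context. Then $\tau_\omega(P)\in\mathbb{K}(q)[M^m]\langle L\rangle$ and $S(P)\subseteq S(\tau_\omega(P))$.
   Context: In $\mathbb{W}$ and $\mathbb{O}$ the relation $LM=qML$ holds ($L$ acts on sequences by $Lf_n=f_{n+1}$, $M$ by $Mf_n=q^nf_n$). The operator $\tau_\omega(P)$ is the annihilator of the twisted sequence produced from $P$ as follows: take a nonzero element $A$ of minimal order in $L$ of the left ideal $\mathbb{O}P\cap\mathbb{K}(q,M^m)\langle L\rangle$ (i.e. an element of $\mathbb{O}P$ in which $M$ occurs only with exponents divisible by $m$), clear denominators so that $A=\sum_j c_j(q,M)L^j$ with polynomial coefficients in $M^m$ that are content-free, $\gcd(c_0,\dots,c_d)=1$, and then substitute $q\to\omega q$; if $Pf_n(q)=0$ then $\tau_\omega(P)f_n(\omega q)=0$. Newton polygon: for $P\in\mathbb{W}$ written as a sum of monomials $M^bL^a$ with coefficients in $\mathbb{K}(q)$, $N(P)$ is the convex hull in $\mathbb{R}^2$ of the exponent pairs $(a,b)$ occurring. $LN(P)$ is the lower convex hull of $N(P)$, consisting of finitely many non-vertical line segments and two vertical rays; $S(P)$ denotes the set of slopes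 of the non-vertical segments of $LN(P)$. *)

theory Defs
  imports "HOL-Analysis.Analysis" "HOL-Computational_Algebra.Polynomial"
          "HOL-Computational_Algebra.Fraction_Field"
begin

text \<open>K(q): rational functions in the transcendental q over K.\<close>
type_synonym 'k qfun = "'k poly fract"
text \<open>W = K(q)[M]<L>: an element is a polynomial in L (outer) whose coefficients
  are polynomials in M over K(q); written with coefficients on the left of L^j.\<close>
type_synonym 'k qweyl = "'k qfun poly poly"
text \<open>O = K(q,M)<L>, with K(q,M) = Frac(K(q)[M]).\<close>
type_synonym 'k qore = "'k qfun poly fract poly"

definition qvar :: "'k::field qfun" where
  "qvar = Fract [:0, 1:] 1"

text \<open>Extension of a (injective ring) map to fractions, on representatives.\<close>
definition fract_map :: "('a::idom \<Rightarrow> 'b::idom) \<Rightarrow> 'a fract \<Rightarrow> 'b fract" where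
  "fract_map f x = (SOME y. \<forall>a b. b \<noteq> 0 \<longrightarrow> x = Fract a b \<longrightarrow> y = Fract (f a) (f b))"

text \<open>Commutation L c = sigma(c) L with sigma(c)(M) = c(qM), i.e. L M = q M L.\<close>
definition sigma_W :: "'k::field qfun poly \<Rightarrow> 'k qfun poly" where
  "sigma_W c = pcompose c [:0, qvar:]"

definition sigma_O :: "'k::field qfun poly fract \<Rightarrow> 'k qfun poly fract" where
  "sigma_O = fract_map sigma_W"

definition skew_mult :: "('a::comm_ring_1 \<Rightarrow> 'a) \<Rightarrow> 'a poly \<Rightarrow> 'a poly \<Rightarrow> 'a poly" where
  "skew_mult \<sigma> A B =
     (\<Sum>i\<le>degree A. \<Sum>j\<le>degree B. monom (coeff A i * (\<sigma> ^^ i) (coeff B j)) (i + j))"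

definition W_to_O :: "'k::field qweyl \<Rightarrow> 'k qore" where
  "W_to_O A = map_poly (\<lambda>c. Fract c 1) A"

definition left_ideal_O :: "'k::field qweyl \<Rightarrow> 'k qore set" where
  "left_ideal_O P = {skew_mult sigma_O Q (W_to_O P) | Q. True}"

definition in_Mm_poly :: "nat \<Rightarrow> 'a::zero poly \<Rightarrow> bool" where
  "in_Mm_poly m p \<longleftrightarrow> (\<forall>i. coeff p i \<noteq> 0 \<longrightarrow> m dvd i)"

definition in_KqMm :: "nat \<Rightarrow> 'k::field qfun poly fract \<Rightarrow> bool" where
  "in_KqMm m x \<longleftrightarrow> (\<exists>a b. b \<noteq> 0 \<and> in_Mm_poly m a \<and> in_Mm_poly m b \<and> x = Fract a b)"

definition in_O_Mm :: "nat \<Rightarrow> 'k::field qore \<Rightarrow> bool" where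
  "in_O_Mm m A \<longleftrightarrow> (\<forall>j. in_KqMm m (coeff A j))"

text \<open>A is an admissible choice for the operator before twisting: a nonzero element of
  minimal L-order in O P \<inter> K(q,M^m)<L>, with denominators cleared (coefficients in
  K(q)[M^m]) and content-free (the coefficients have no common non-unit divisor).\<close>
definition tau_pre :: "nat \<Rightarrow> 'k::field qweyl \<Rightarrow> 'k qweyl \<Rightarrow> bool" where
  "tau_pre m P A \<longleftrightarrow>
     A \<noteq> 0 \<and> (\<forall>j. in_Mm_poly m (coeff A j)) \<and> W_to_O A \<in> left_ideal_O P \<and>
     (\<forall>B. B \<in> left_ideal_O P \<and> in_O_Mm m B \<and> B \<noteq> 0 \<longrightarrow> degree A \<le> degree B) \<and>
     (\<forall>d. (\<forall>j. d dvd coeff A j) \<longrightarrow> is_unit d)"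

definition subst_q :: "'k::field \<Rightarrow> 'k qfun \<Rightarrow> 'k qfun" where
  "subst_q \<omega> = fract_map (\<lambda>a. pcompose a [:0, \<omega>:])"

definition twist :: "'k::field \<Rightarrow> 'k qweyl \<Rightarrow> 'k qweyl" where
  "twist \<omega> A = map_poly (map_poly (subst_q \<omega>)) A"

definition newton_polygon :: "'k::field qweyl \<Rightarrow> (real \<times> real) set" where
  "newton_polygon P = convex hull {(real a, real b) | a b. coeff (coeff P a) b \<noteq> 0}"

text \<open>Lower convex hull: boundary of N(P) + upward vertical ray (segments plus two vertical rays).\<close>
definition lower_hull :: "(real \<times> real) set \<Rightarrow> (real \<times> real) set" where
  "lower_hull X = frontier {(x, y + t) | x y t. (x, y) \<in> X \<and> t \<ge> 0}"

definition newton_slopes :: "'k::field qweyl \<Rightarrow> real set" where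
  "newton_slopes P = {(snd v - snd u) / (fst v - fst u) | u v.
      fst u < fst v \<and> closed_segment u v \<subseteq> lower_hull (newton_polygon P)}"

end

theory Submission
  imports Defs
begin

text \<open>
  Let \<open>v\<close> be the valuation of \<open>K(q,M)\<close> at \<open>M = 0\<close>. The lower hull of the Newton polygon
  of an element of \<open>W\<close> only sees the lowest point \<open>(i, v(x\<^sub>i))\<close> of each column, and \<open>s\<close> is one
  of its slopes iff the minimum of \<open>v(x\<^sub>i) - s i\<close> over the support is attained at two indices.
  The twist \<open>c(M) \<mapsto> c(qM)\<close> preserves \<open>v\<close>, so for a product \<open>Q P\<close> in \<open>O\<close> this minimum is the sum
  of the minima for \<open>Q\<close> and \<open>P\<close>, and the smallest (largest) minimizing index of \<open>Q P\<close> is the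
  sum of the smallest (largest) ones of \<open>Q\<close> and \<open>P\<close>. Hence every slope of \<open>P\<close> is a slope of
  every nonzero \<open>A \<in> O P\<close>. The substitution \<open>q \<mapsto> \<omega> q\<close> changes no coefficient from zero to
  nonzero, so it keeps both the support of \<open>A\<close> and the exponents of \<open>M\<close> occurring in it.
\<close>

section \<open>The valuation at \<open>M = 0\<close>\<close>

lemma coeff_less_order_0:
  fixes p :: "'a::idom poly"
  assumes "p \<noteq> 0" "k < order 0 p"
  shows "coeff p k = 0"
  using monom_1_dvd_iff[OF assms(1), of "order 0 p"] monom_1_dvd_iff'[of "order 0 p" p] assms(2)
  by simp

lemma coeff_order_0_nonzero:
  fixes p :: "'a::idom poly"
  assumes "p \<noteq> 0"
  shows "coeff p (order 0 p) \<noteq> 0"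
proof
  assume "coeff p (order 0 p) = 0"
  then have "\<forall>k<Suc (order 0 p). coeff p k = 0"
    using coeff_less_order_0[OF assms] by (auto simp: less_Suc_eq)
  then have "Suc (order 0 p) \<le> order 0 p"
    using monom_1_dvd_iff[OF assms] monom_1_dvd_iff' by blast
  then show False by simp
qed

lemma order_0_le:
  fixes p :: "'a::idom poly"
  assumes "coeff p n \<noteq> 0"
  shows "order 0 p \<le> n"
proof -
  have "p \<noteq> 0" using assms by auto
  with assms show ?thesis
    using coeff_less_order_0[of p n] by (meson not_le)
qed

lemma order_0_eqI:
  fixes p :: "'a::idom poly"
  assumes "coeff p n \<noteq> 0" "\<And>i. i < n \<Longrightarrow> coeff p i = 0"
  shows "order 0 p = n"
proof -
  have "p \<noteq> 0" using assms(1) by auto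
  then have "\<not> order 0 p < n"
    using assms(2) coeff_order_0_nonzero by blast
  with order_0_le[OF assms(1)] show ?thesis by simp
qed

lemma order_0_add_ge:
  fixes p q :: "'a::idom poly"
  assumes "p \<noteq> 0" "q \<noteq> 0" "p + q \<noteq> 0"
  shows "min (order 0 p) (order 0 q) \<le> order 0 (p + q)"
proof -
  have "\<forall>k<min (order 0 p) (order 0 q). coeff (p + q) k = 0"
    using coeff_less_order_0[OF assms(1)] coeff_less_order_0[OF assms(2)] by simp
  then show ?thesis
    using monom_1_dvd_iff[OF assms(3)] monom_1_dvd_iff' by blast
qed

lemma pcompose_linear_eq_0_iff:
  fixes p :: "'a::idom poly"
  assumes "c \<noteq> 0"
  shows "pcompose p [:0, c:] = 0 \<longleftrightarrow> p = 0"
  using assms by (simp add: pcompose_eq_0_iff)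

lemma order_0_pcompose_linear:
  fixes p :: "'a::idom poly"
  assumes "c \<noteq> 0" "p \<noteq> 0"
  shows "order 0 (pcompose p [:0, c:]) = order 0 p"
  using assms by (intro order_0_eqI) (simp_all add: coeff_pcompose_linear coeff_order_0_nonzero coeff_less_order_0)

text \<open>The value \<open>val0 0\<close> is unspecified.\<close>
definition val0 :: "'a::idom poly fract \<Rightarrow> int" where
  "val0 x = (SOME n. \<exists>a b. a \<noteq> 0 \<and> b \<noteq> 0 \<and> x = Fract a b \<and> n = int (order 0 a) - int (order 0 b))"

lemma Fract_eq_0_iff: "b \<noteq> 0 \<Longrightarrow> Fract a b = 0 \<longleftrightarrow> a = 0"
  by (simp add: Zero_fract_def eq_fract)

lemma val0_Fract:
  fixes a b :: "'a::idom poly"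
  assumes "a \<noteq> 0" "b \<noteq> 0"
  shows "val0 (Fract a b) = int (order 0 a) - int (order 0 b)"
proof -
  have unique: "n = int (order 0 a) - int (order 0 b)"
    if "c \<noteq> 0" "d \<noteq> 0" "Fract a b = Fract c d" "n = int (order 0 c) - int (order 0 d)" for n c d
  proof -
    have "a * d = c * b" using that assms eq_fract by auto
    then have "order 0 a + order 0 d = order 0 c + order 0 b"
      using order_mult assms that by (metis mult_eq_0_iff)
    with that show ?thesis by linarith
  qed
  show ?thesis unfolding val0_def
  proof (rule someI2)
    show "\<exists>c d. c \<noteq> 0 \<and> d \<noteq> 0 \<and> Fract a b = Fract c d
            \<and> int (order 0 a) - int (order 0 b) = int (order 0 c) - int (order 0 d)"
      using assms by blast
  qed (use unique in blast)
qed

lemma val0_mult: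
  fixes x y :: "'a::idom poly fract"
  assumes "x \<noteq> 0" "y \<noteq> 0"
  shows "val0 (x * y) = val0 x + val0 y"
proof -
  obtain a b where x: "x = Fract a b" "a \<noteq> 0" "b \<noteq> 0"
    using assms(1) by (cases x rule: Fract_cases_nonzero) auto
  obtain c d where y: "y = Fract c d" "c \<noteq> 0" "d \<noteq> 0"
    using assms(2) by (cases y rule: Fract_cases_nonzero) auto
  show ?thesis using x y by (simp add: val0_Fract order_mult)
qed

lemma val0_add_ge:
  fixes x y :: "'a::idom poly fract"
  assumes "x \<noteq> 0" "y \<noteq> 0" "x + y \<noteq> 0"
  shows "min (val0 x) (val0 y) \<le> val0 (x + y)"
proof -
  obtain a b where x: "x = Fract a b" "a \<noteq> 0" "b \<noteq> 0"
    using assms(1) by (cases x rule: Fract_cases_nonzero) auto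
  obtain c d where y: "y = Fract c d" "c \<noteq> 0" "d \<noteq> 0"
    using assms(2) by (cases y rule: Fract_cases_nonzero) auto
  have sum: "x + y = Fract (a * d + c * b) (b * d)" using x y by simp
  then have "a * d + c * b \<noteq> 0"
    using assms(3) x(3) y(3) by (auto simp: Fract_eq_0_iff)
  then have "min (order 0 (a * d)) (order 0 (c * b)) \<le> order 0 (a * d + c * b)"
    using x y by (intro order_0_add_ge) simp_all
  with \<open>a * d + c * b \<noteq> 0\<close> show ?thesis
    unfolding sum using x y by (simp add: val0_Fract order_mult)
qed

lemma val0_uminus: "val0 (- x) = val0 x"
  by (cases x rule: Fract_cases_nonzero) (simp_all add: val0_Fract)

lemma val0_sum_ge:
  fixes f :: "'b \<Rightarrow> 'a::idom poly fract" and r :: real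
  assumes "finite I" "sum f I \<noteq> 0" "\<And>i. i \<in> I \<Longrightarrow> f i \<noteq> 0 \<Longrightarrow> r \<le> val0 (f i)"
  shows "r \<le> val0 (sum f I)"
  using assms
proof (induction I rule: finite_induct)
  case empty
  then show ?case by simp
next
  case (insert i I)
  consider "f i = 0" | "sum f I = 0" | "f i \<noteq> 0" "sum f I \<noteq> 0" by blast
  then show ?case
  proof cases
    case 3
    have "min (val0 (f i)) (val0 (sum f I)) \<le> val0 (sum f (insert i I))"
      using val0_add_ge[OF 3] insert.prems(1) insert.hyps by simp
    moreover have "r \<le> val0 (f i)" "r \<le> val0 (sum f I)"
      using insert 3 by simp_all
    ultimately show ?thesis by linarith
  qed (use insert in simp_all)
qed

lemma val0_sum_unique_min:
  fixes f :: "'b \<Rightarrow> 'a::idom poly fract"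
  assumes "finite I" "i0 \<in> I" "f i0 \<noteq> 0"
    and less: "\<And>i. i \<in> I \<Longrightarrow> i \<noteq> i0 \<Longrightarrow> f i \<noteq> 0 \<Longrightarrow> val0 (f i0) < val0 (f i)"
  shows "sum f I \<noteq> 0" "val0 (sum f I) = val0 (f i0)"
proof -
  define S where "S = sum f (I - {i0})"
  have sum: "sum f I = f i0 + S"
    unfolding S_def using assms(1,2) by (simp add: sum.remove)
  have "sum f I \<noteq> 0 \<and> val0 (sum f I) = val0 (f i0)"
  proof (cases "S = 0")
    case False
    have "real_of_int (val0 (f i0) + 1) \<le> val0 (f i)" if "i \<in> I - {i0}" "f i \<noteq> 0" for i
    proof -
      have "val0 (f i0) + 1 \<le> val0 (f i)" using less[of i] that by simp
      then show ?thesis by (simp only: of_int_le_iff)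
    qed
    then have "real_of_int (val0 (f i0) + 1) \<le> val0 S"
      using assms(1) False unfolding S_def by (intro val0_sum_ge) auto
    then have less_S: "val0 (f i0) < val0 S" by linarith
    have nz: "f i0 + S \<noteq> 0"
    proof
      assume "f i0 + S = 0"
      then have "S = - f i0" by (simp add: eq_neg_iff_add_eq_0 add.commute)
      with less_S show False by (simp add: val0_uminus)
    qed
    have "min (val0 (f i0)) (val0 S) \<le> val0 (f i0 + S)"
      using val0_add_ge[OF assms(3) False nz] .
    moreover have "min (val0 (f i0 + S)) (val0 (- S)) \<le> val0 (f i0)"
      using val0_add_ge[OF nz, of "- S"] False assms(3) by simp
    ultimately show ?thesis
      using less_S nz unfolding sum by (simp add: val0_uminus)
  qed (use sum assms(3) in simp)
  then show "sum f I \<noteq> 0" "val0 (sum f I) = val0 (f i0)" by simp_all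
qed

section \<open>Skew products and their lowest faces\<close>

definition val0_preserving :: "('a::idom poly fract \<Rightarrow> 'a poly fract) \<Rightarrow> bool" where
  "val0_preserving \<sigma> \<longleftrightarrow> (\<forall>x. (\<sigma> x = 0 \<longleftrightarrow> x = 0) \<and> val0 (\<sigma> x) = val0 x)"

lemma val0_preserving_funpow: "val0_preserving \<sigma> \<Longrightarrow> val0_preserving (\<sigma> ^^ n)"
  by (induction n) (simp_all add: val0_preserving_def)

lemma fract_map_Fract:
  assumes mult: "\<And>x y. f (x * y) = f x * f y" and nz: "\<And>x. x \<noteq> 0 \<Longrightarrow> f x \<noteq> 0"
    and "b \<noteq> 0"
  shows "fract_map f (Fract a b) = Fract (f a) (f b)"
proof -
  let ?P = "\<lambda>y. \<forall>a' b'. b' \<noteq> 0 \<longrightarrow> Fract a b = Fract a' b' \<longrightarrow> y = Fract (f a') (f b')"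
  have "Fract (f a) (f b) = Fract (f a') (f b')" if "b' \<noteq> 0" "Fract a b = Fract a' b'" for a' b'
  proof -
    have "a * b' = a' * b" using that \<open>b \<noteq> 0\<close> eq_fract by auto
    then have "f a * f b' = f a' * f b" by (metis mult)
    moreover have "f b \<noteq> 0" "f b' \<noteq> 0" using nz \<open>b \<noteq> 0\<close> \<open>b' \<noteq> 0\<close> by auto
    ultimately show ?thesis by (simp add: eq_fract)
  qed
  then have "?P (Fract (f a) (f b))"
    by blast
  then have "?P (fract_map f (Fract a b))"
    unfolding fract_map_def by (rule someI)
  with \<open>b \<noteq> 0\<close> show ?thesis by blast
qed

lemma qvar_nonzero: "qvar \<noteq> (0 :: 'k::field qfun)"
  unfolding qvar_def by (simp add: Fract_eq_0_iff)

lemma sigma_W_eq_0_iff: "sigma_W a = 0 \<longleftrightarrow> a = 0"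
  unfolding sigma_W_def by (simp add: pcompose_linear_eq_0_iff qvar_nonzero)

lemma sigma_O_Fract:
  "b \<noteq> 0 \<Longrightarrow> sigma_O (Fract a b :: 'k::field qfun poly fract) = Fract (sigma_W a) (sigma_W b)"
  unfolding sigma_O_def
  by (rule fract_map_Fract) (simp_all add: sigma_W_def pcompose_mult sigma_W_eq_0_iff[unfolded sigma_W_def])

lemma val0_preserving_sigma_O: "val0_preserving (sigma_O :: 'k::field qfun poly fract \<Rightarrow> _)"
  unfolding val0_preserving_def
proof
  fix x :: "'k qfun poly fract"
  show "(sigma_O x = 0 \<longleftrightarrow> x = 0) \<and> val0 (sigma_O x) = val0 x"
  proof (cases x rule: Fract_cases_nonzero)
    case (Fract a b)
    then show ?thesis
      by (simp add: sigma_O_Fract Fract_eq_0_iff val0_Fract sigma_W_def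
          pcompose_linear_eq_0_iff order_0_pcompose_linear qvar_nonzero)
  next
    case 0
    have "sigma_O (Fract 0 1 :: 'k qfun poly fract) = 0"
      by (simp add: sigma_O_Fract sigma_W_def Zero_fract_def eq_fract(3))
    with 0 show ?thesis by (simp add: Zero_fract_def)
  qed
qed

lemma coeff_skew_mult:
  "coeff (skew_mult \<sigma> A B) k =
     (\<Sum>(i, j)\<in>{..degree A} \<times> {..degree B}. if i + j = k then coeff A i * (\<sigma> ^^ i) (coeff B j) else 0)"
  unfolding skew_mult_def coeff_sum coeff_monom by (simp add: sum.cartesian_product)

lemma skew_mult_0_left: "skew_mult \<sigma> 0 B = 0"
  unfolding skew_mult_def by simp

definition val_intercept :: "real \<Rightarrow> 'a::idom poly fract poly \<Rightarrow> nat \<Rightarrow> real" where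
  "val_intercept s X i = real_of_int (val0 (coeff X i)) - s * real i"

definition val_face :: "real \<Rightarrow> 'a::idom poly fract poly \<Rightarrow> nat set" where
  "val_face s X = {i. coeff X i \<noteq> 0 \<and> (\<forall>j. coeff X j \<noteq> 0 \<longrightarrow> val_intercept s X i \<le> val_intercept s X j)}"

definition has_val_slope :: "real \<Rightarrow> 'a::idom poly fract poly \<Rightarrow> bool" where
  "has_val_slope s X \<longleftrightarrow> (\<exists>i\<in>val_face s X. \<exists>j\<in>val_face s X. i < j)"

lemma finite_val_face: "finite (val_face s X)"
  by (rule finite_subset[of _ "{..degree X}"]) (auto simp: val_face_def intro: le_degree)

lemma val_face_nonempty:
  assumes "X \<noteq> 0"
  shows "val_face s X \<noteq> {}"
proof -
  define I where "I = {i. coeff X i \<noteq> 0}"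
  have "finite I"
    unfolding I_def by (rule finite_subset[of _ "{..degree X}"]) (auto intro: le_degree)
  moreover have "degree X \<in> I"
    unfolding I_def using assms by simp
  ultimately have "Min (val_intercept s X ` I) \<in> val_intercept s X ` I"
    by (intro Min_in) auto
  then obtain i where "i \<in> I" "val_intercept s X i = Min (val_intercept s X ` I)"
    by (metis imageE)
  with \<open>finite I\<close> have "i \<in> val_face s X"
    unfolding val_face_def I_def by auto
  then show ?thesis by blast
qed

lemma val_face_le: "i0 \<in> val_face s X \<Longrightarrow> coeff X i \<noteq> 0 \<Longrightarrow> val_intercept s X i0 \<le> val_intercept s X i"
  unfolding val_face_def by blast

lemma not_in_val_face_less:
  assumes "i0 \<in> val_face s X" "coeff X i \<noteq> 0" "i \<notin> val_face s X"
  shows "val_intercept s X i0 < val_intercept s X i"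
proof -
  obtain j where "coeff X j \<noteq> 0" "val_intercept s X j < val_intercept s X i"
    using assms(2,3) unfolding val_face_def by (auto simp: not_le)
  with val_face_le[OF assms(1)] show ?thesis by fastforce
qed

lemma val0_skew_term:
  assumes "val0_preserving \<sigma>" "coeff X i * (\<sigma> ^^ i) (coeff Y j) \<noteq> 0"
  shows "coeff X i \<noteq> 0" "coeff Y j \<noteq> 0"
    and "val0 (coeff X i * (\<sigma> ^^ i) (coeff Y j)) = val0 (coeff X i) + val0 (coeff Y j)"
proof -
  have pres: "val0_preserving (\<sigma> ^^ i)"
    using assms(1) by (rule val0_preserving_funpow)
  show X: "coeff X i \<noteq> 0" using assms(2) by auto
  show Y: "coeff Y j \<noteq> 0" using assms(2) pres by (auto simp: val0_preserving_def)
  show "val0 (coeff X i * (\<sigma> ^^ i) (coeff Y j)) = val0 (coeff X i) + val0 (coeff Y j)"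
    using X Y pres by (simp add: val0_mult val0_preserving_def)
qed

lemma skew_mult_val_intercept_ge:
  assumes \<sigma>: "val0_preserving \<sigma>" and i0: "i0 \<in> val_face s X" and j0: "j0 \<in> val_face s Y"
    and k: "coeff (skew_mult \<sigma> X Y) k \<noteq> 0"
  shows "val_intercept s X i0 + val_intercept s Y j0 \<le> val_intercept s (skew_mult \<sigma> X Y) k"
proof -
  let ?t = "\<lambda>(i, j). if i + j = k then coeff X i * (\<sigma> ^^ i) (coeff Y j) else 0"
  have "val_intercept s X i0 + val_intercept s Y j0 + s * real k \<le> val0 (coeff (skew_mult \<sigma> X Y) k)"
    unfolding coeff_skew_mult
  proof (rule val0_sum_ge)
    show "sum ?t ({..degree X} \<times> {..degree Y}) \<noteq> 0"
      using k unfolding coeff_skew_mult .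
  next
    fix p assume "?t p \<noteq> 0"
    then obtain i j where p: "p = (i, j)" "i + j = k" and t: "coeff X i * (\<sigma> ^^ i) (coeff Y j) \<noteq> 0"
      by (cases p) (auto split: if_splits)
    note tm = val0_skew_term[OF \<sigma> t]
    have "val_intercept s X i0 \<le> val_intercept s X i" "val_intercept s Y j0 \<le> val_intercept s Y j"
      using val_face_le i0 j0 tm(1,2) by blast+
    moreover have "s * real k = s * real i + s * real j"
      using p(2) by (metis distrib_left of_nat_add)
    moreover have "val0 (?t p) = val0 (coeff X i) + val0 (coeff Y j)"
      using p tm(3) by simp
    ultimately show "val_intercept s X i0 + val_intercept s Y j0 + s * real k \<le> val0 (?t p)"
      unfolding val_intercept_def by linarith
  qed simp
  then show ?thesis unfolding val_intercept_def by simp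
qed

lemma skew_mult_val_intercept_extreme:
  assumes \<sigma>: "val0_preserving \<sigma>" and i0: "i0 \<in> val_face s X" and j0: "j0 \<in> val_face s Y"
    and unique: "\<And>i j. i \<in> val_face s X \<Longrightarrow> j \<in> val_face s Y \<Longrightarrow> i + j = i0 + j0 \<Longrightarrow> i = i0"
  shows "coeff (skew_mult \<sigma> X Y) (i0 + j0) \<noteq> 0"
    and "val_intercept s (skew_mult \<sigma> X Y) (i0 + j0) = val_intercept s X i0 + val_intercept s Y j0"
proof -
  let ?t = "\<lambda>(i, j). if i + j = i0 + j0 then coeff X i * (\<sigma> ^^ i) (coeff Y j) else 0"
  have X0: "coeff X i0 \<noteq> 0" and Y0: "coeff Y j0 \<noteq> 0"
    using i0 j0 unfolding val_face_def by auto
  then have t0: "coeff X i0 * (\<sigma> ^^ i0) (coeff Y j0) \<noteq> 0"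
    using val0_preserving_funpow[OF \<sigma>, of i0] by (simp add: val0_preserving_def)
  note tm0 = val0_skew_term[OF \<sigma> t0]
  have mem: "(i0, j0) \<in> {..degree X} \<times> {..degree Y}"
    using X0 Y0 le_degree by auto
  have less: "val0 (?t (i0, j0)) < val0 (?t p)"
    if p: "p \<in> {..degree X} \<times> {..degree Y}" "p \<noteq> (i0, j0)" "?t p \<noteq> 0" for p
  proof -
    obtain i j where ij: "p = (i, j)" "i + j = i0 + j0" and t: "coeff X i * (\<sigma> ^^ i) (coeff Y j) \<noteq> 0"
      using p(3) by (cases p) (auto split: if_splits)
    note tm = val0_skew_term[OF \<sigma> t]
    have ge: "val_intercept s X i0 \<le> val_intercept s X i" "val_intercept s Y j0 \<le> val_intercept s Y j"
      using val_face_le i0 j0 tm(1,2) by blast+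
    have "i \<notin> val_face s X \<or> j \<notin> val_face s Y"
      using unique ij p(2) by auto
    then have "val_intercept s X i0 + val_intercept s Y j0 < val_intercept s X i + val_intercept s Y j"
      using ge not_in_val_face_less[OF i0 tm(1)] not_in_val_face_less[OF j0 tm(2)] by auto
    moreover have "s * real i + s * real j = s * real i0 + s * real j0"
      using ij(2) by (metis distrib_left of_nat_add)
    ultimately have "real_of_int (val0 (coeff X i0) + val0 (coeff Y j0))
                     < real_of_int (val0 (coeff X i) + val0 (coeff Y j))"
      unfolding val_intercept_def by simp
    then have "val0 (coeff X i0) + val0 (coeff Y j0) < val0 (coeff X i) + val0 (coeff Y j)"
      by (simp only: of_int_less_iff)
    then show ?thesis
      using ij tm(3) tm0(3) by simp
  qed
  have "?t (i0, j0) \<noteq> 0" using t0 by simp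
  note sum_min = val0_sum_unique_min[where f = ?t, OF finite_cartesian_product[OF finite_atMost finite_atMost]
      mem this less]
  then show "coeff (skew_mult \<sigma> X Y) (i0 + j0) \<noteq> 0"
    and "val_intercept s (skew_mult \<sigma> X Y) (i0 + j0) = val_intercept s X i0 + val_intercept s Y j0"
    unfolding coeff_skew_mult val_intercept_def using tm0(3) by (simp_all add: algebra_simps)
qed

lemma extreme_in_val_face_skew_mult:
  assumes \<sigma>: "val0_preserving \<sigma>" and i0: "i0 \<in> val_face s X" and j0: "j0 \<in> val_face s Y"
    and unique: "\<And>i j. i \<in> val_face s X \<Longrightarrow> j \<in> val_face s Y \<Longrightarrow> i + j = i0 + j0 \<Longrightarrow> i = i0"
  shows "i0 + j0 \<in> val_face s (skew_mult \<sigma> X Y)"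
  unfolding val_face_def mem_Collect_eq
proof (intro conjI allI impI)
  note extreme = skew_mult_val_intercept_extreme[OF assms]
  show "coeff (skew_mult \<sigma> X Y) (i0 + j0) \<noteq> 0"
    by (rule extreme(1))
  fix k assume "coeff (skew_mult \<sigma> X Y) k \<noteq> 0"
  then show "val_intercept s (skew_mult \<sigma> X Y) (i0 + j0) \<le> val_intercept s (skew_mult \<sigma> X Y) k"
    using extreme(2) skew_mult_val_intercept_ge[OF \<sigma> i0 j0] by simp
qed

lemma has_val_slope_skew_mult:
  assumes \<sigma>: "val0_preserving \<sigma>" and "X \<noteq> 0" and "has_val_slope s Y"
  shows "has_val_slope s (skew_mult \<sigma> X Y)"
proof -
  define i1 where "i1 = Min (val_face s X)"
  define i2 where "i2 = Max (val_face s X)"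
  define j1 where "j1 = Min (val_face s Y)"
  define j2 where "j2 = Max (val_face s Y)"
  obtain j j' where j: "j \<in> val_face s Y" "j' \<in> val_face s Y" "j < j'"
    using assms(3) unfolding has_val_slope_def by blast
  have X_ne: "val_face s X \<noteq> {}"
    using \<open>X \<noteq> 0\<close> by (rule val_face_nonempty)
  have Y_ne: "val_face s Y \<noteq> {}"
    using j(1) by auto
  have mem: "i1 \<in> val_face s X" "i2 \<in> val_face s X" "j1 \<in> val_face s Y" "j2 \<in> val_face s Y"
    unfolding i1_def i2_def j1_def j2_def
    by (simp_all add: finite_val_face X_ne Y_ne)
  have bounds: "i1 \<le> i" "i \<le> i2" if "i \<in> val_face s X" for i
    unfolding i1_def i2_def using finite_val_face that by (rule Min_le, rule Max_ge)
  have bounds': "j1 \<le> j" "j \<le> j2" if "j \<in> val_face s Y" for j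
    unfolding j1_def j2_def using finite_val_face that by (rule Min_le, rule Max_ge)
  have "i1 + j1 \<in> val_face s (skew_mult \<sigma> X Y)"
  proof (rule extreme_in_val_face_skew_mult[OF \<sigma> mem(1) mem(3)])
    fix i j assume "i \<in> val_face s X" "j \<in> val_face s Y" "i + j = i1 + j1"
    then show "i = i1" using bounds(1)[of i] bounds'(1)[of j] by linarith
  qed
  moreover have "i2 + j2 \<in> val_face s (skew_mult \<sigma> X Y)"
  proof (rule extreme_in_val_face_skew_mult[OF \<sigma> mem(2) mem(4)])
    fix i j assume "i \<in> val_face s X" "j \<in> val_face s Y" "i + j = i2 + j2"
    then show "i = i2" using bounds(2)[of i] bounds'(2)[of j] by linarith
  qed
  moreover have "i1 + j1 < i2 + j2"
    using bounds(1)[OF mem(2)] bounds'(1)[OF j(1)] bounds'(2)[OF j(2)] j(3) by linarith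
  ultimately show ?thesis
    unfolding has_val_slope_def by (intro bexI[of _ "i1 + j1"] bexI[of _ "i2 + j2"])
qed

section \<open>Slopes of lower hulls in the plane\<close>

lemma supporting_hyperplane_not_interior:
  fixes S :: "'a::euclidean_space set"
  assumes "convex S" "x \<in> S" "x \<notin> interior S"
  obtains a where "a \<noteq> 0" "\<And>y. y \<in> S \<Longrightarrow> a \<bullet> x \<le> a \<bullet> y"
proof (cases "interior S = {}")
  case True
  then obtain a b where "a \<noteq> 0" and hyp: "S \<subseteq> {y. a \<bullet> y = b}"
    using empty_interior_subset_hyperplane[OF \<open>convex S\<close>] by metis
  have "a \<bullet> y = b" if "y \<in> S" for y
    using hyp that by blast
  with assms(2) \<open>a \<noteq> 0\<close> show thesis by (intro that[of a]) auto
next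
  case False
  then have "x \<notin> rel_interior S" using assms(3) by (simp add: rel_interior_nonempty_interior)
  with assms(1,2) show thesis
    by (metis closure_subset subsetD supporting_hyperplane_relative_frontier that)
qed

lemma convex_hull_Int_supporting_hyperplane:
  fixes S :: "'a::euclidean_space set"
  assumes "compact S" and ge: "\<And>x. x \<in> S \<Longrightarrow> b \<le> a \<bullet> x"
  shows "convex hull S \<inter> {x. a \<bullet> x = b} = convex hull {x\<in>S. a \<bullet> x = b}"
proof
  have "convex hull S \<subseteq> {x. b \<le> a \<bullet> x}"
    using ge by (intro hull_minimal) (auto simp: convex_halfspace_ge)
  then have "(convex hull S \<inter> {x. a \<bullet> x = b}) face_of convex hull S"
    by (intro face_of_Int_supporting_hyperplane_ge) auto
  then obtain S' where "S' \<subseteq> S" and S': "convex hull S \<inter> {x. a \<bullet> x = b} = convex hull S'"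
    using face_of_convex_hull_subset[OF \<open>compact S\<close>] by metis
  have "S' \<subseteq> {x\<in>S. a \<bullet> x = b}"
    using S' \<open>S' \<subseteq> S\<close> hull_subset[of S' convex] by blast
  then show "convex hull S \<inter> {x. a \<bullet> x = b} \<subseteq> convex hull {x\<in>S. a \<bullet> x = b}"
    unfolding S' by (rule hull_mono)
next
  have "convex hull {x\<in>S. a \<bullet> x = b} \<subseteq> {x. a \<bullet> x = b}"
    by (intro hull_minimal) (auto simp: convex_hyperplane)
  moreover have "convex hull {x\<in>S. a \<bullet> x = b} \<subseteq> convex hull S"
    by (rule hull_mono) blast
  ultimately show "convex hull {x\<in>S. a \<bullet> x = b} \<subseteq> convex hull S \<inter> {x. a \<bullet> x = b}"
    by blast
qed

definition intercept :: "real \<Rightarrow> real \<times> real \<Rightarrow> real" where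
  "intercept s p = snd p - s * fst p"

lemma intercept_inner: "intercept s p = (- s, 1) \<bullet> p"
  by (simp add: intercept_def inner_prod_def)

lemma intercept_eq_slope:
  assumes "fst u < fst v"
  shows "intercept ((snd v - snd u) / (fst v - fst u)) v = intercept ((snd v - snd u) / (fst v - fst u)) u"
  using assms by (simp add: intercept_def field_simps)

lemma intercept_up: "intercept s (z + (0, t)) = intercept s z + t"
  by (simp add: intercept_def)

definition upward_closure :: "(real \<times> real) set \<Rightarrow> (real \<times> real) set" where
  "upward_closure X = (\<Union>x\<in>X. \<Union>y\<in>{0} \<times> {0..}. {x + y})"

lemma upward_closureE:
  assumes "z \<in> upward_closure X"
  obtains x t where "x \<in> X" "t \<ge> 0" "z = x + (0, t)"
  using assms unfolding upward_closure_def by auto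

lemma upward_closureI: "x \<in> X \<Longrightarrow> t \<ge> 0 \<Longrightarrow> x + (0, t) \<in> upward_closure X"
  unfolding upward_closure_def by auto

lemma subset_upward_closure: "X \<subseteq> upward_closure X"
  using upward_closureI[of _ X 0] by auto

lemma upward_closure_up:
  assumes "z \<in> upward_closure X" "t \<ge> 0"
  shows "z + (0, t) \<in> upward_closure X"
proof -
  obtain x t' where "x \<in> X" "t' \<ge> 0" "z = x + (0, t')"
    using assms(1) by (rule upward_closureE)
  then show ?thesis
    using upward_closureI[of x X "t' + t"] assms(2) by (simp add: add.assoc)
qed

lemma lower_hull_eq_frontier: "lower_hull X = frontier (upward_closure X)"
proof -
  have "{(x, y + t) | x y t. (x, y) \<in> X \<and> t \<ge> 0} = upward_closure X"
  proof (intro equalityI subsetI)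
    fix z assume "z \<in> {(x, y + t) | x y t. (x, y) \<in> X \<and> t \<ge> 0}"
    then obtain x y t where "z = (x, y + t)" "(x, y) \<in> X" "t \<ge> 0" by blast
    then show "z \<in> upward_closure X" using upward_closureI[of "(x, y)" X t] by simp
  next
    fix z assume "z \<in> upward_closure X"
    then obtain p t where "p \<in> X" "t \<ge> 0" "z = p + (0, t)" by (rule upward_closureE)
    then show "z \<in> {(x, y + t) | x y t. (x, y) \<in> X \<and> t \<ge> 0}" by (cases p) auto
  qed
  then show ?thesis unfolding lower_hull_def by simp
qed

lemma closed_upward_closure: "compact X \<Longrightarrow> closed (upward_closure X)"
  unfolding upward_closure_def
  by (intro compact_closed_sums) (auto simp: closed_Times)

lemma convex_upward_closure: "convex X \<Longrightarrow> convex (upward_closure X)"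
  unfolding upward_closure_def
  by (intro convex_sums) (auto simp: convex_Times)

lemma normal_of_nonvertical_segment:
  fixes a :: "real \<times> real"
  assumes "a \<noteq> 0" "snd a \<ge> 0" "a \<bullet> u = a \<bullet> v" "fst u < fst v"
    and s: "s = (snd v - snd u) / (fst v - fst u)"
  shows "snd a > 0" "a \<bullet> y = snd a * intercept s y"
proof -
  obtain a1 a2 where a: "a = (a1, a2)" by (cases a)
  have "a1 * (fst v - fst u) + a2 * (snd v - snd u) = 0"
    using assms(3) unfolding a by (simp add: inner_prod_def algebra_simps)
  moreover have "snd v - snd u = s * (fst v - fst u)"
    using s assms(4) by simp
  ultimately have "(a1 + a2 * s) * (fst v - fst u) = 0"
    by (simp add: algebra_simps)
  then have a1: "a1 = - a2 * s"
    using assms(4) by simp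
  with assms(1) a have "a2 \<noteq> 0"
    by (auto simp: zero_prod_def)
  with assms(2) a show "snd a > 0"
    by simp
  show "a \<bullet> y = snd a * intercept s y"
    unfolding a a1 by (simp add: inner_prod_def intercept_def algebra_simps)
qed

lemma lower_hull_segment_minimizes_intercept:
  assumes C: "compact C" "convex C"
    and seg: "closed_segment u v \<subseteq> lower_hull C" and uv: "fst u < fst v"
    and s: "s = (snd v - snd u) / (fst v - fst u)"
  shows "u \<in> upward_closure C" "v \<in> upward_closure C"
    and "\<And>y. y \<in> upward_closure C \<Longrightarrow> intercept s u \<le> intercept s y"
proof -
  define R where "R = upward_closure C"
  have front: "closed_segment u v \<subseteq> frontier R"
    using seg unfolding R_def lower_hull_eq_frontier .
  have "frontier R \<subseteq> R"
    unfolding R_def using closed_upward_closure[OF C(1)] by (rule frontier_subset_closed)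
  then have uR: "u \<in> R" and vR: "v \<in> R"
    using front ends_in_segment by blast+
  show "u \<in> upward_closure C" "v \<in> upward_closure C" using uR vR unfolding R_def .
  define x where "x = midpoint u v"
  have "x \<in> frontier R"
    using front midpoint_in_closed_segment unfolding x_def by blast
  then have xR: "x \<in> R" and "x \<notin> interior R"
    using \<open>frontier R \<subseteq> R\<close> unfolding frontier_def by auto
  \<comment> \<open>A supporting line at the midpoint contains \<open>u\<close> and \<open>v\<close>, so it is not vertical.\<close>
  then obtain a where "a \<noteq> 0" and supp: "\<And>y. y \<in> R \<Longrightarrow> a \<bullet> x \<le> a \<bullet> y"
    using supporting_hyperplane_not_interior convex_upward_closure[OF C(2)] unfolding R_def by metis
  have "a \<bullet> x \<le> a \<bullet> (x + (0, 1))"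
    using supp upward_closure_up xR unfolding R_def by simp
  then have "snd a \<ge> 0"
    by (simp add: inner_prod_def algebra_simps)
  have "a \<bullet> u + a \<bullet> v = 2 * (a \<bullet> x)"
    unfolding x_def midpoint_def by (simp add: inner_add_right)
  then have "a \<bullet> u = a \<bullet> x" "a \<bullet> v = a \<bullet> x"
    using supp[OF uR] supp[OF vR] by linarith+
  then have "a \<bullet> u = a \<bullet> v" by simp
  note normal = normal_of_nonvertical_segment[OF \<open>a \<noteq> 0\<close> \<open>snd a \<ge> 0\<close> this uv s]
  fix y assume "y \<in> upward_closure C"
  then have "a \<bullet> u \<le> a \<bullet> y"
    using supp \<open>a \<bullet> u = a \<bullet> x\<close> unfolding R_def by simp
  then have "snd a * intercept s u \<le> snd a * intercept s y"
    unfolding normal(2) .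
  with normal(1) show "intercept s u \<le> intercept s y"
    by simp
qed

lemma min_intercept_in_convex_hull:
  assumes "compact Pts" and m_le: "\<And>y. y \<in> convex hull Pts \<Longrightarrow> m \<le> intercept s y"
    and z: "z \<in> upward_closure (convex hull Pts)" "intercept s z = m"
  shows "z \<in> convex hull {p\<in>Pts. intercept s p = m}"
proof -
  obtain x t where x: "x \<in> convex hull Pts" "t \<ge> 0" "z = x + (0, t)"
    using z(1) by (rule upward_closureE)
  have "t = 0" "intercept s x = m"
    using m_le[OF x(1)] z(2) x(2,3) intercept_up[of s x t] by simp_all
  then have "z \<in> convex hull Pts \<inter> {y. (- s, 1) \<bullet> y = m}"
    using x by (simp add: intercept_inner zero_prod_def[symmetric])
  also have "\<dots> = convex hull {p\<in>Pts. intercept s p = m}"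
    unfolding intercept_inner
  proof (rule convex_hull_Int_supporting_hyperplane)
    show "m \<le> (- s, 1) \<bullet> p" if "p \<in> Pts" for p
      using m_le[OF hull_inc[OF that]] by (simp add: intercept_inner)
  qed fact
  finally show ?thesis .
qed

lemma convex_fst_eq: "convex {y :: real \<times> real. fst y = c}"
proof -
  have "{y :: real \<times> real. fst y = c} = {y. (1, 0) \<bullet> y = c}"
    by (simp add: inner_prod_def)
  then show ?thesis by (simp add: convex_hyperplane)
qed

lemma convex_hull_fst_less:
  fixes F :: "(real \<times> real) set"
  assumes "u \<in> convex hull F" "v \<in> convex hull F" "fst u < fst v"
  obtains p1 p2 where "p1 \<in> F" "p2 \<in> F" "fst p1 < fst p2"
proof (rule ccontr)
  assume no_pair: "\<not> thesis"
  have "F \<noteq> {}"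
    using assms(1) by (metis convex_hull_empty empty_iff)
  then obtain p0 where "p0 \<in> F"
    by blast
  have "F \<subseteq> {y. fst y = fst p0}"
  proof
    fix y assume "y \<in> F"
    then have "\<not> fst y < fst p0" "\<not> fst p0 < fst y"
      using no_pair that \<open>p0 \<in> F\<close> by blast+
    then show "y \<in> {y. fst y = fst p0}" by simp
  qed
  then have "convex hull F \<subseteq> {y. fst y = fst p0}"
    by (rule hull_minimal) (rule convex_fst_eq)
  then have "fst u = fst p0" "fst v = fst p0"
    using assms(1,2) by blast+
  with assms(3) show False by simp
qed

lemma supporting_pair_of_lower_hull_segment:
  assumes fin: "finite Pts"
    and seg: "closed_segment u v \<subseteq> lower_hull (convex hull Pts)" and uv: "fst u < fst v"
    and s: "s = (snd v - snd u) / (fst v - fst u)"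
  shows "\<exists>p1\<in>Pts. \<exists>p2\<in>Pts. fst p1 < fst p2 \<and> intercept s p1 = intercept s p2
           \<and> (\<forall>p\<in>Pts. intercept s p1 \<le> intercept s p)"
proof -
  let ?C = "convex hull Pts"
  have "compact ?C" "convex ?C"
    using fin by (simp_all add: finite_imp_compact_convex_hull)
  note min = lower_hull_segment_minimizes_intercept[OF this seg uv s]
  define m where "m = intercept s u"
  have m_le: "m \<le> intercept s y" if "y \<in> ?C" for y
    using min(3)[OF subsetD[OF subset_upward_closure that]] unfolding m_def .
  have in_hull: "z \<in> convex hull {p\<in>Pts. intercept s p = m}"
    if "z \<in> upward_closure ?C" "intercept s z = m" for z
    using finite_imp_compact[OF fin] m_le that by (rule min_intercept_in_convex_hull)
  have "u \<in> convex hull {p\<in>Pts. intercept s p = m}"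
    using in_hull[OF min(1)] m_def by simp
  moreover have "v \<in> convex hull {p\<in>Pts. intercept s p = m}"
    using in_hull[OF min(2)] intercept_eq_slope[OF uv] s m_def by simp
  ultimately obtain p1 p2 where "p1 \<in> Pts" "p2 \<in> Pts" "intercept s p1 = m" "intercept s p2 = m"
    "fst p1 < fst p2"
    using uv by (rule convex_hull_fst_less) blast
  moreover have "\<forall>p\<in>Pts. m \<le> intercept s p"
    by (simp add: m_le hull_inc)
  ultimately show ?thesis
    by (intro bexI[of _ p1] bexI[of _ p2] conjI) simp_all
qed

lemma lower_hull_segment_of_supporting_pair:
  assumes p: "p1 \<in> Pts" "p2 \<in> Pts"
    and eq: "intercept s p1 = intercept s p2"
    and min: "\<forall>p\<in>Pts. intercept s p1 \<le> intercept s p"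
  shows "closed_segment p1 p2 \<subseteq> lower_hull (convex hull Pts)"
proof
  fix z assume z: "z \<in> closed_segment p1 p2"
  define R where "R = upward_closure (convex hull Pts)"
  have hull_ge: "convex hull Pts \<subseteq> {y. intercept s p1 \<le> intercept s y}"
  proof (rule hull_minimal)
    show "Pts \<subseteq> {y. intercept s p1 \<le> intercept s y}"
      using min by blast
    show "convex {y. intercept s p1 \<le> intercept s y}"
      unfolding intercept_inner by (rule convex_halfspace_ge)
  qed
  have min_R: "intercept s p1 \<le> intercept s y" if "y \<in> R" for y
  proof -
    obtain x t where "x \<in> convex hull Pts" "t \<ge> 0" "y = x + (0, t)"
      using \<open>y \<in> R\<close> unfolding R_def by (rule upward_closureE)
    moreover from this have "intercept s p1 \<le> intercept s x"
      using hull_ge by blast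
    ultimately show ?thesis
      by (simp add: intercept_up)
  qed
  have "z \<in> convex hull Pts"
    using closed_segment_subset_convex_hull[OF hull_inc[OF p(1)] hull_inc[OF p(2)]] z by blast
  then have zR: "z \<in> R"
    unfolding R_def using subset_upward_closure by blast
  obtain l where "z = (1 - l) *\<^sub>R p1 + l *\<^sub>R p2"
    using z unfolding closed_segment_def by blast
  then have "intercept s z = (1 - l) * intercept s p1 + l * intercept s p2"
    by (simp add: intercept_inner inner_add_right)
  then have z_int: "intercept s z = intercept s p1"
    using eq by (simp add: algebra_simps)
  have "z \<notin> interior R"
  proof
    assume "z \<in> interior R"
    then obtain e where "e > 0" "ball z e \<subseteq> R"
      using mem_interior by blast
    moreover have "z - (0, e / 2) \<in> ball z e"
      using \<open>e > 0\<close> by (simp add: dist_norm)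
    ultimately have "intercept s p1 \<le> intercept s (z - (0, e / 2))"
      using min_R by blast
    then show False
      using z_int \<open>e > 0\<close> by (simp add: intercept_def)
  qed
  with zR show "z \<in> lower_hull (convex hull Pts)"
    unfolding lower_hull_eq_frontier frontier_def R_def[symmetric]
    using closure_subset by blast
qed

lemma lower_hull_slopes_supporting_pairs:
  assumes "finite Pts"
  shows "{(snd v - snd u) / (fst v - fst u) | u v.
            fst u < fst v \<and> closed_segment u v \<subseteq> lower_hull (convex hull Pts)}
       = {s. \<exists>p1\<in>Pts. \<exists>p2\<in>Pts. fst p1 < fst p2 \<and> intercept s p1 = intercept s p2
               \<and> (\<forall>p\<in>Pts. intercept s p1 \<le> intercept s p)}"
proof (intro equalityI subsetI CollectI)
  fix s assume "s \<in> {(snd v - snd u) / (fst v - fst u) | u v.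
                    fst u < fst v \<and> closed_segment u v \<subseteq> lower_hull (convex hull Pts)}"
  then obtain u v where "s = (snd v - snd u) / (fst v - fst u)" "fst u < fst v"
    "closed_segment u v \<subseteq> lower_hull (convex hull Pts)"
    unfolding mem_Collect_eq by blast
  then show "\<exists>p1\<in>Pts. \<exists>p2\<in>Pts. fst p1 < fst p2 \<and> intercept s p1 = intercept s p2
               \<and> (\<forall>p\<in>Pts. intercept s p1 \<le> intercept s p)"
    using supporting_pair_of_lower_hull_segment[OF assms] by simp
next
  fix s assume "s \<in> {s. \<exists>p1\<in>Pts. \<exists>p2\<in>Pts. fst p1 < fst p2 \<and> intercept s p1 = intercept s p2
               \<and> (\<forall>p\<in>Pts. intercept s p1 \<le> intercept s p)}"
  then obtain p1 p2 where p: "p1 \<in> Pts" "p2 \<in> Pts" "fst p1 < fst p2"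
    and eq: "intercept s p1 = intercept s p2" and min: "\<forall>p\<in>Pts. intercept s p1 \<le> intercept s p"
    unfolding mem_Collect_eq by blast
  have "s = (snd p2 - snd p1) / (fst p2 - fst p1)"
    using eq p(3) by (simp add: intercept_def field_simps)
  with p(3) lower_hull_segment_of_supporting_pair[OF p(1,2) eq min]
  show "\<exists>u v. s = (snd v - snd u) / (fst v - fst u) \<and>
          fst u < fst v \<and> closed_segment u v \<subseteq> lower_hull (convex hull Pts)"
    by blast
qed

section \<open>Newton polygons of \<open>q\<close>-difference operators\<close>

definition newton_points :: "'a::zero poly poly \<Rightarrow> (real \<times> real) set" where
  "newton_points P = {(real a, real b) | a b. coeff (coeff P a) b \<noteq> 0}"

definition lowest_point :: "'a::idom poly poly \<Rightarrow> nat \<Rightarrow> real \<times> real" where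
  "lowest_point P a = (real a, real (order 0 (coeff P a)))"

lemma finite_newton_points: "finite (newton_points P)"
proof -
  have "newton_points P \<subseteq> (\<Union>a\<le>degree P. (\<lambda>b. (real a, real b)) ` {..degree (coeff P a)})"
  proof
    fix p assume "p \<in> newton_points P"
    then obtain a b where p: "p = (real a, real b)" "coeff (coeff P a) b \<noteq> 0"
      unfolding newton_points_def by blast
    then have "a \<le> degree P" "b \<le> degree (coeff P a)"
      by (auto intro: le_degree)
    with p show "p \<in> (\<Union>a\<le>degree P. (\<lambda>b. (real a, real b)) ` {..degree (coeff P a)})"
      by blast
  qed
  then show ?thesis by (rule finite_subset) simp
qed

lemma newton_slopes_supporting_pairs:
  "newton_slopes P = {s. \<exists>p1\<in>newton_points P. \<exists>p2\<in>newton_points P. fst p1 < fst p2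
      \<and> intercept s p1 = intercept s p2 \<and> (\<forall>p\<in>newton_points P. intercept s p1 \<le> intercept s p)}"
  unfolding newton_slopes_def newton_polygon_def newton_points_def[symmetric]
  by (rule lower_hull_slopes_supporting_pairs[OF finite_newton_points])

lemma lowest_point_in_newton_points:
  "coeff P a \<noteq> 0 \<Longrightarrow> lowest_point P a \<in> newton_points P"
  unfolding lowest_point_def newton_points_def mem_Collect_eq
  by (intro exI[of _ a] exI[of _ "order 0 (coeff P a)"]) (simp add: coeff_order_0_nonzero)

lemma lowest_point_below:
  assumes "p \<in> newton_points P"
  obtains a where "coeff P a \<noteq> 0" "fst (lowest_point P a) = fst p"
    "intercept s (lowest_point P a) \<le> intercept s p"
proof -
  obtain a b where p: "p = (real a, real b)" "coeff (coeff P a) b \<noteq> 0"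
    using assms unfolding newton_points_def by blast
  have "order 0 (coeff P a) \<le> b"
    using p(2) by (rule order_0_le)
  moreover have "coeff P a \<noteq> 0"
    using p(2) by auto
  ultimately show thesis
    using p by (intro that[of a]) (simp_all add: lowest_point_def intercept_def)
qed

lemma coeff_W_to_O: "coeff (W_to_O A) i = Fract (coeff A i) 1"
  unfolding W_to_O_def by (simp add: coeff_map_poly Zero_fract_def[symmetric])

lemma coeff_W_to_O_eq_0_iff: "coeff (W_to_O A) i = 0 \<longleftrightarrow> coeff A i = 0"
  by (simp add: coeff_W_to_O Fract_eq_0_iff)

lemma val_intercept_W_to_O:
  "coeff A i \<noteq> 0 \<Longrightarrow> val_intercept s (W_to_O A) i = intercept s (lowest_point A i)"
  by (simp add: val_intercept_def coeff_W_to_O val0_Fract order_0I lowest_point_def intercept_def)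

lemma val_face_W_to_O:
  "i \<in> val_face s (W_to_O A) \<longleftrightarrow>
     coeff A i \<noteq> 0 \<and> (\<forall>p\<in>newton_points A. intercept s (lowest_point A i) \<le> intercept s p)"
proof
  assume i: "i \<in> val_face s (W_to_O A)"
  then have A_i: "coeff A i \<noteq> 0"
    unfolding val_face_def by (simp add: coeff_W_to_O_eq_0_iff)
  have "intercept s (lowest_point A i) \<le> intercept s p" if p: "p \<in> newton_points A" for p
  proof -
    obtain a where a: "coeff A a \<noteq> 0" "intercept s (lowest_point A a) \<le> intercept s p"
      using lowest_point_below[OF p] by metis
    have "val_intercept s (W_to_O A) i \<le> val_intercept s (W_to_O A) a"
      using val_face_le[OF i] a(1) by (simp add: coeff_W_to_O_eq_0_iff)
    with a A_i show ?thesis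
      by (simp add: val_intercept_W_to_O)
  qed
  with A_i show "coeff A i \<noteq> 0 \<and> (\<forall>p\<in>newton_points A. intercept s (lowest_point A i) \<le> intercept s p)"
    by blast
next
  assume "coeff A i \<noteq> 0 \<and> (\<forall>p\<in>newton_points A. intercept s (lowest_point A i) \<le> intercept s p)"
  then show "i \<in> val_face s (W_to_O A)"
    unfolding val_face_def
    by (auto simp: coeff_W_to_O_eq_0_iff val_intercept_W_to_O lowest_point_in_newton_points)
qed

lemma newton_slopes_iff_has_val_slope:
  "s \<in> newton_slopes A \<longleftrightarrow> has_val_slope s (W_to_O A)"
proof
  assume "s \<in> newton_slopes A"
  then obtain p1 p2 where p: "p1 \<in> newton_points A" "p2 \<in> newton_points A" "fst p1 < fst p2"
    and eq: "intercept s p1 = intercept s p2"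
    and min: "\<forall>p\<in>newton_points A. intercept s p1 \<le> intercept s p"
    unfolding newton_slopes_supporting_pairs by blast
  obtain i1 where i1: "coeff A i1 \<noteq> 0" "fst (lowest_point A i1) = fst p1"
    "intercept s (lowest_point A i1) \<le> intercept s p1"
    using lowest_point_below[OF p(1)] by metis
  obtain i2 where i2: "coeff A i2 \<noteq> 0" "fst (lowest_point A i2) = fst p2"
    "intercept s (lowest_point A i2) \<le> intercept s p2"
    using lowest_point_below[OF p(2)] by metis
  have "intercept s (lowest_point A i1) \<le> intercept s p"
    "intercept s (lowest_point A i2) \<le> intercept s p" if "p \<in> newton_points A" for p
    using i1(3) i2(3) eq min[rule_format, OF that] by linarith+
  then have "i1 \<in> val_face s (W_to_O A)" "i2 \<in> val_face s (W_to_O A)"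
    unfolding val_face_W_to_O using i1(1) i2(1) by blast+
  moreover have "i1 < i2"
    using i1(2) i2(2) p(3) by (simp add: lowest_point_def)
  ultimately show "has_val_slope s (W_to_O A)"
    unfolding has_val_slope_def by blast
next
  assume "has_val_slope s (W_to_O A)"
  then obtain i1 i2 where i: "i1 \<in> val_face s (W_to_O A)" "i2 \<in> val_face s (W_to_O A)" "i1 < i2"
    unfolding has_val_slope_def by blast
  then have A_i: "coeff A i1 \<noteq> 0" "coeff A i2 \<noteq> 0"
    and min1: "\<forall>p\<in>newton_points A. intercept s (lowest_point A i1) \<le> intercept s p"
    and min2: "\<forall>p\<in>newton_points A. intercept s (lowest_point A i2) \<le> intercept s p"
    unfolding val_face_W_to_O by blast+
  note in_points = lowest_point_in_newton_points[OF A_i(1)] lowest_point_in_newton_points[OF A_i(2)]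
  have "intercept s (lowest_point A i1) = intercept s (lowest_point A i2)"
    using min1 min2 in_points by (simp add: order_antisym)
  with i(3) in_points min1 show "s \<in> newton_slopes A"
    unfolding newton_slopes_supporting_pairs mem_Collect_eq
    by (intro bexI[of _ "lowest_point A i1"] bexI[of _ "lowest_point A i2"] conjI)
      (simp_all add: lowest_point_def)
qed

lemma subst_q_Fract:
  fixes \<omega> :: "'k::field"
  assumes "\<omega> \<noteq> 0" "b \<noteq> 0"
  shows "subst_q \<omega> (Fract a b) = Fract (pcompose a [:0, \<omega>:]) (pcompose b [:0, \<omega>:])"
  unfolding subst_q_def
  by (rule fract_map_Fract) (simp_all add: pcompose_mult pcompose_linear_eq_0_iff assms)

lemma subst_q_eq_0_iff:
  fixes \<omega> :: "'k::field"
  assumes "\<omega> \<noteq> 0"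
  shows "subst_q \<omega> x = 0 \<longleftrightarrow> x = 0"
proof -
  obtain a b where x: "x = Fract a b" "b \<noteq> 0"
    by (cases x)
  then show ?thesis
    using assms by (simp add: subst_q_Fract Fract_eq_0_iff pcompose_linear_eq_0_iff)
qed

lemma coeff_coeff_twist_eq_0_iff:
  fixes \<omega> :: "'k::field"
  assumes "\<omega> \<noteq> 0"
  shows "coeff (coeff (twist \<omega> A) a) b = 0 \<longleftrightarrow> coeff (coeff A a) b = 0"
proof -
  have "subst_q \<omega> 0 = 0"
    using subst_q_eq_0_iff[OF assms] by simp
  then show ?thesis
    unfolding twist_def by (simp add: coeff_map_poly subst_q_eq_0_iff[OF assms])
qed

lemma newton_points_twist:
  fixes \<omega> :: "'k::field"
  assumes "\<omega> \<noteq> 0"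
  shows "newton_points (twist \<omega> A) = newton_points A"
  unfolding newton_points_def coeff_coeff_twist_eq_0_iff[OF assms] ..

lemma in_Mm_poly_twist:
  fixes \<omega> :: "'k::field"
  assumes "\<omega> \<noteq> 0"
  shows "in_Mm_poly m (coeff (twist \<omega> A) j) \<longleftrightarrow> in_Mm_poly m (coeff A j)"
  unfolding in_Mm_poly_def coeff_coeff_twist_eq_0_iff[OF assms] ..

lemma W_to_O_eq_0_iff: "W_to_O A = 0 \<longleftrightarrow> A = 0"
  by (simp add: poly_eq_iff coeff_W_to_O_eq_0_iff)

theorem proposition2:
  fixes P A :: "'k::field_char_0 qweyl" and \<omega> :: 'k and m :: nat
  assumes roots_of_unity: "\<forall>n>0. \<exists>\<zeta>::'k. \<zeta> ^ n = 1 \<and> (\<forall>k. 0 < k \<and> k < n \<longrightarrow> \<zeta> ^ k \<noteq> 1)"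
    and P_nz: "P \<noteq> 0"
    and m_pos: "m > 0"
    and omega: "\<omega> ^ m = 1"
    and A: "tau_pre m P A"
  shows "(\<forall>j. in_Mm_poly m (coeff (twist \<omega> A) j))
         \<and> newton_slopes P \<subseteq> newton_slopes (twist \<omega> A)"
proof -
  have "\<omega> \<noteq> 0"
    using omega m_pos by (cases "\<omega> = 0") (simp_all add: power_0_left)
  obtain Q where "A \<noteq> 0" and A_Mm: "\<forall>j. in_Mm_poly m (coeff A j)"
    and A_Q: "W_to_O A = skew_mult sigma_O Q (W_to_O P)"
    using A unfolding tau_pre_def left_ideal_O_def by blast
  then have "Q \<noteq> 0"
    using W_to_O_eq_0_iff skew_mult_0_left by metis
  have "newton_slopes P \<subseteq> newton_slopes A"
  proof
    fix s assume "s \<in> newton_slopes P"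
    then show "s \<in> newton_slopes A"
      unfolding newton_slopes_iff_has_val_slope A_Q
      by (rule has_val_slope_skew_mult[OF val0_preserving_sigma_O \<open>Q \<noteq> 0\<close>])
  qed
  moreover have "newton_slopes (twist \<omega> A) = newton_slopes A"
    unfolding newton_slopes_supporting_pairs newton_points_twist[OF \<open>\<omega> \<noteq> 0\<close>] ..
  ultimately show ?thesis
    using A_Mm in_Mm_poly_twist[OF \<open>\<omega> \<noteq> 0\<close>] by simp
qed

end
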